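(* Let $S\subseteq\mathbb{R}^n\times\mathbb{R}^m$ be convex. A set $\bar S\subseteq S$ is a solution of the convex projection (CP) if and only if it is a solution of the multi-objective problem (MOCP).
   Context: (CP): compute $Y=\{y\in\mathbb{R}^m:\exists x,(x,y)\in S\}$. A set $\bar S\subseteq S$ is a solution of (CP) if $Y\subseteq\operatorname{cl}\operatorname{conv}\operatorname{proj}_y[\bar S]$, where $\operatorname{proj}_y(x,y)=y$. (MOCP): minimize $P(x,y)=(y,-\mathbf{1}^\top y)$ w.r.t. $\le_{\mathbb{R}^{m+1}_+}$ subject to $(x,y)\in S$ ($\mathbf{1}\in\mathbb{R}^m$ all-ones), with upper image $\mathcal{P}=\operatorname{cl}(P[S]+\mathbb{R}^{m+1}_+)$. A set $\bar S\subseteq S$ is a solution of (MOCP) if $\mathcal{P}=\operatorname{cl}\operatorname{conv}(P[\bar S]+\mathbb{R}^{m+1}_+)$ (all feasible points are minimizers of (MOCP), so this coincides with the general notion of a solution as an infimizer consisting of minimizers). *)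

theory Defs
  imports "HOL-Analysis.Analysis"
begin

text \<open>Points of R^n x R^m are pairs (x, y) with x :: real^'n, y :: real^'m.
  R^(m+1) is represented as (real^'m) \<times> real (the last coordinate is the extra one).\<close>

definition proj_y :: "(real^'n) \<times> (real^'m) \<Rightarrow> real^'m" where
  "proj_y p = snd p"

definition proj_image :: "((real^'n) \<times> (real^'m)) set \<Rightarrow> (real^'m) set" where
  "proj_image S = {y. \<exists>x. (x, y) \<in> S}"

definition CP_solution :: "((real^'n) \<times> (real^'m)) set \<Rightarrow> ((real^'n) \<times> (real^'m)) set \<Rightarrow> bool" where
  "CP_solution S Sbar \<longleftrightarrow> Sbar \<subseteq> S \<and> proj_image S \<subseteq> closure (convex hull (proj_y ` Sbar))"

definition Pobj :: "(real^'n) \<times> (real^'m) \<Rightarrow> (real^'m) \<times> real" where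
  "Pobj p = (snd p, - (\<Sum>i\<in>UNIV. snd p $ i))"

definition orthant :: "((real^'m) \<times> real) set" where
  "orthant = {(v, t). (\<forall>i. 0 \<le> v $ i) \<and> 0 \<le> t}"

definition plus_orthant :: "((real^'m) \<times> real) set \<Rightarrow> ((real^'m) \<times> real) set" where
  "plus_orthant A = {a + c | a c. a \<in> A \<and> c \<in> orthant}"

definition upper_image :: "((real^'n) \<times> (real^'m)) set \<Rightarrow> ((real^'m) \<times> real) set" where
  "upper_image S = closure (plus_orthant (Pobj ` S))"

definition MOCP_solution :: "((real^'n) \<times> (real^'m)) set \<Rightarrow> ((real^'n) \<times> (real^'m)) set \<Rightarrow> bool" where
  "MOCP_solution S Sbar \<longleftrightarrow> Sbar \<subseteq> S \<and>
     upper_image S = closure (convex hull (plus_orthant (Pobj ` Sbar)))"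

end

theory Submission
  imports Defs
begin

text \<open>The objective P factors as P = L \<circ> proj_y with the linear embedding L y = (y, -1^T y) of
  R^m into R^(m+1). The functional \<phi>(v, t) = 1^T v + t vanishes on the image of L and is
  nonnegative on the orthant, and it can only converge to 0 along orthant points that converge
  to 0. Hence L y lies in the closure of L[C] + R^(m+1)_+ only if y lies in the closure of C, while
  conversely L[C] + R^(m+1)_+ is convex whenever C is. With C the convex hull of proj_y[Sbar], the
  equality of upper images required by (MOCP) is therefore equivalent to Y \<subseteq> cl C, which is (CP).\<close>

definition Pobj_y :: "real^'m \<Rightarrow> (real^'m) \<times> real" where
  "Pobj_y y = (y, - (\<Sum>i\<in>UNIV. y $ i))"

definition coord_sum :: "(real^'m) \<times> real \<Rightarrow> real" where
  "coord_sum p = (\<Sum>i\<in>UNIV. fst p $ i) + snd p"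

lemma linear_Pobj_y: "linear Pobj_y"
  by (rule linearI) (auto simp: Pobj_y_def sum.distrib sum_distrib_left)

lemma Pobj_eq_Pobj_y: "Pobj p = Pobj_y (proj_y p)"
  by (simp add: Pobj_def Pobj_y_def proj_y_def)

lemma image_Pobj: "Pobj ` A = Pobj_y ` proj_y ` A"
  by (auto simp: Pobj_eq_Pobj_y)

lemma coord_sum_Pobj_y [simp]: "coord_sum (Pobj_y y) = 0"
  by (simp add: coord_sum_def Pobj_y_def)

lemma coord_sum_add [simp]: "coord_sum (p + q) = coord_sum p + coord_sum q"
  by (simp add: coord_sum_def sum.distrib)

lemma tendsto_coord_sum: "(f \<longlongrightarrow> p) F \<Longrightarrow> ((\<lambda>n. coord_sum (f n)) \<longlongrightarrow> coord_sum p) F"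
  unfolding coord_sum_def by (intro tendsto_intros)


lemma zero_in_orthant: "0 \<in> orthant"
  by (simp add: orthant_def zero_prod_def)

lemma convex_orthant: "convex orthant"
  unfolding orthant_def convex_def by (auto intro!: add_nonneg_nonneg)

lemma orthant_coord_bounds:
  assumes "p \<in> orthant"
  shows "0 \<le> fst p $ i" and "fst p $ i \<le> coord_sum p"
proof -
  show "0 \<le> fst p $ i"
    using assms by (auto simp: orthant_def)
  have "fst p $ i \<le> (\<Sum>j\<in>UNIV. fst p $ j)"
    using assms by (intro member_le_sum) (auto simp: orthant_def)
  then show "fst p $ i \<le> coord_sum p"
    using assms by (auto simp: coord_sum_def orthant_def)
qed

lemma orthant_tendsto_zero:
  assumes orth: "\<And>n. d n \<in> orthant"
    and sum0: "(\<lambda>n. coord_sum (d n)) \<longlonglongrightarrow> 0"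
  shows "(\<lambda>n. fst (d n)) \<longlonglongrightarrow> 0"
proof (rule vec_tendstoI)
  fix i
  have "(\<lambda>n. fst (d n) $ i) \<longlonglongrightarrow> 0"
    using orth by (intro tendsto_sandwich[OF _ _ tendsto_const sum0] always_eventually allI orthant_coord_bounds)
  then show "(\<lambda>n. fst (d n) $ i) \<longlonglongrightarrow> 0 $ i"
    by simp
qed


lemma mem_plus_orthant_iff: "z \<in> plus_orthant A \<longleftrightarrow> (\<exists>c\<in>orthant. \<exists>a\<in>A. z = c + a)"
  unfolding plus_orthant_def by (blast intro: add.commute)

lemma plus_orthant_mono: "A \<subseteq> B \<Longrightarrow> plus_orthant A \<subseteq> plus_orthant B"
  unfolding plus_orthant_def by blast

lemma subset_plus_orthant: "A \<subseteq> plus_orthant A"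
proof
  fix a
  assume "a \<in> A"
  then show "a \<in> plus_orthant A"
    unfolding mem_plus_orthant_iff using zero_in_orthant by (metis add_0)
qed

lemma translation_subset_plus_orthant: "c \<in> orthant \<Longrightarrow> (+) c ` A \<subseteq> plus_orthant A"
  unfolding subset_iff mem_plus_orthant_iff by blast

lemma convex_plus_orthant:
  assumes "convex A"
  shows "convex (plus_orthant A)"
proof -
  have "plus_orthant A = (\<Union>a\<in>A. \<Union>c\<in>orthant. {a + c})"
    unfolding plus_orthant_def by blast
  then show ?thesis
    using convex_sums[OF assms convex_orthant] by simp
qed

lemma convex_hull_plus_orthant: "convex hull (plus_orthant A) = plus_orthant (convex hull A)"
proof
  show "convex hull (plus_orthant A) \<subseteq> plus_orthant (convex hull A)"
    by (intro hull_minimal plus_orthant_mono hull_subset convex_plus_orthant convex_convex_hull)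
  show "plus_orthant (convex hull A) \<subseteq> convex hull (plus_orthant A)"
  proof
    fix z
    assume "z \<in> plus_orthant (convex hull A)"
    then obtain a c where z: "z = c + a" "a \<in> convex hull A" "c \<in> orthant"
      unfolding mem_plus_orthant_iff by blast
    then have "z \<in> (+) c ` (convex hull A)"
      by blast
    also have "\<dots> = convex hull ((+) c ` A)"
      by (rule convex_hull_translation[symmetric])
    also have "\<dots> \<subseteq> convex hull (plus_orthant A)"
      using z(3) by (intro hull_mono translation_subset_plus_orthant)
    finally show "z \<in> convex hull (plus_orthant A)" .
  qed
qed

lemma closure_plus_orthant_closure: "closure (plus_orthant (closure A)) = closure (plus_orthant A)"
proof
  show "closure (plus_orthant A) \<subseteq> closure (plus_orthant (closure A))"
    by (intro closure_mono plus_orthant_mono closure_subset)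
  show "closure (plus_orthant (closure A)) \<subseteq> closure (plus_orthant A)"
  proof (intro closure_minimal closed_closure subsetI)
    fix z
    assume "z \<in> plus_orthant (closure A)"
    then obtain a c where z: "z = c + a" "a \<in> closure A" "c \<in> orthant"
      unfolding mem_plus_orthant_iff by blast
    then have "z \<in> (+) c ` closure A"
      by blast
    also have "\<dots> = closure ((+) c ` A)"
      by (rule closure_translation[symmetric])
    also have "\<dots> \<subseteq> closure (plus_orthant A)"
      using z(3) by (intro closure_mono translation_subset_plus_orthant)
    finally show "z \<in> closure (plus_orthant A)" .
  qed
qed


lemma mem_closure_if_Pobj_y_mem_closure_plus_orthant:
  assumes "Pobj_y y \<in> closure (plus_orthant (Pobj_y ` C))"
  shows "y \<in> closure C"
proof -
  obtain z where z_mem: "\<And>n. z n \<in> plus_orthant (Pobj_y ` C)" and z_lim: "z \<longlonglongrightarrow> Pobj_y y"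
    using assms unfolding closure_sequential by blast
  have "\<forall>n. \<exists>d c. d \<in> orthant \<and> c \<in> C \<and> z n = d + Pobj_y c"
    using z_mem unfolding mem_plus_orthant_iff by blast
  then obtain d c where d: "\<And>n. d n \<in> orthant" and c: "\<And>n. c n \<in> C"
    and z_eq: "\<And>n. z n = d n + Pobj_y (c n)"
    by metis
  have "(\<lambda>n. coord_sum (z n)) \<longlonglongrightarrow> 0"
    using tendsto_coord_sum[OF z_lim] by simp
  then have "(\<lambda>n. fst (d n)) \<longlonglongrightarrow> 0"
    using d by (intro orthant_tendsto_zero) (simp_all add: z_eq)
  with tendsto_fst[OF z_lim] have "(\<lambda>n. fst (z n) - fst (d n)) \<longlonglongrightarrow> y - 0"
    by (intro tendsto_diff) (simp_all add: Pobj_y_def)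
  then have "c \<longlonglongrightarrow> y"
    by (simp add: z_eq Pobj_y_def)
  then show ?thesis
    unfolding closure_sequential using c by blast
qed

lemma subset_closure_iff_closure_plus_orthant_eq:
  assumes "convex Y" and "B \<subseteq> Y"
  shows "Y \<subseteq> closure (convex hull B) \<longleftrightarrow>
    closure (plus_orthant (Pobj_y ` Y)) = closure (plus_orthant (Pobj_y ` (convex hull B)))"
    (is "Y \<subseteq> closure ?C \<longleftrightarrow> ?lhs = ?rhs")
proof
  assume Y_sub: "Y \<subseteq> closure ?C"
  have "?C \<subseteq> Y"
    using assms(2,1) by (rule hull_minimal)
  have "continuous_on (closure ?C) Pobj_y"
    using linear_Pobj_y by (intro linear_continuous_on linear_conv_bounded_linear[THEN iffD1])
  then have "Pobj_y ` closure ?C \<subseteq> closure (Pobj_y ` ?C)"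
    by (intro image_closure_subset closed_closure closure_subset)
  with Y_sub have "Pobj_y ` Y \<subseteq> closure (Pobj_y ` ?C)"
    by blast
  then have "?lhs \<subseteq> closure (plus_orthant (closure (Pobj_y ` ?C)))"
    by (intro closure_mono plus_orthant_mono)
  moreover have "?rhs \<subseteq> ?lhs"
    using \<open>?C \<subseteq> Y\<close> by (intro closure_mono plus_orthant_mono image_mono)
  ultimately show "?lhs = ?rhs"
    unfolding closure_plus_orthant_closure by blast
next
  assume eq: "?lhs = ?rhs"
  show "Y \<subseteq> closure ?C"
  proof
    fix y
    assume "y \<in> Y"
    then have "Pobj_y y \<in> ?lhs"
      using subset_plus_orthant closure_subset by blast
    then show "y \<in> closure ?C"
      unfolding eq by (rule mem_closure_if_Pobj_y_mem_closure_plus_orthant)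
  qed
qed

theorem mainTheorem5:
  fixes S Sbar :: "((real^'n) \<times> (real^'m)) set"
  assumes "convex S"
  shows "CP_solution S Sbar \<longleftrightarrow> MOCP_solution S Sbar"
proof -
  have proj: "proj_image S = proj_y ` S"
    unfolding proj_image_def proj_y_def by force
  have convex_proj: "convex (proj_y ` S)"
    unfolding proj_y_def by (intro convex_linear_image linear_snd assms)
  have upper: "upper_image S = closure (plus_orthant (Pobj_y ` proj_y ` S))"
    unfolding upper_image_def image_Pobj ..
  have hull: "convex hull (plus_orthant (Pobj ` Sbar)) = plus_orthant (Pobj_y ` (convex hull (proj_y ` Sbar)))"
    unfolding image_Pobj convex_hull_plus_orthant convex_hull_linear_image[OF linear_Pobj_y] ..
  show ?thesis
  proof (cases "Sbar \<subseteq> S")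
    case True
    then have "proj_y ` Sbar \<subseteq> proj_y ` S"
      by blast
    with True show ?thesis
      unfolding CP_solution_def MOCP_solution_def proj upper hull
      by (simp add: subset_closure_iff_closure_plus_orthant_eq[OF convex_proj])
  next
    case False
    then show ?thesis
      unfolding CP_solution_def MOCP_solution_def by blast
  qed
qed

end
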